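(* Let $X,Y$ be finite sets and $F_X,F_Y$ filtrations over $X$ and $Y$. If $F_X$ and $F_Y$ are weakly equivalent, then $\mathbf{mgm}(F_X)=\mathbf{mgm}(F_Y)$ as multisets of intervals.
   Context: $\mathbf{pow}(X)$ is the set of nonempty subsets of $X$; a filtration over $X$ is an order-preserving map $F_X:(\mathbf{pow}(X),\subset)\to(\mathbb{R},\leq)$. For a surjection $\varphi_X:Z\twoheadrightarrow X$, the pullback filtration is $\varphi_X^*F_X:\mathbf{pow}(Z)\to\mathbb{R}$, $\kappa\mapsto F_X(\varphi_X(\kappa))$. $F_X,F_Y$ are weakly equivalent if there exist a finite set $Z$ and surjections $\varphi_X:Z\twoheadrightarrow X$, $\varphi_Y:Z\twoheadrightarrow Y$ with $\varphi_X^*F_X=\varphi_Y^*F_Y$. The mergegram of $F_X$: let $C_X(t)$ be the set of inclusion-maximal elements of $\{\sigma\in\mathbf{pow}(X)\mid F_X(\sigma)\leq t\}$; for nonempty $\sigma$, $I_\sigma:=\{t\in\mathbb{R}\mid\sigma\in C_X(t)\}$ (equivalently $I_\sigma=[F_X(\sigma),\min_{\sigma\subsetneq\tau\subset X}F_X(\tau))$ with $\min\emptyset=+\infty$); $\mathbf{mgm}(F_X)$ is the multiset of the nonempty $I_\sigma$, one entry per nonempty $\sigma\subset X$ with $I_\sigma\neq\emptyset$. *)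

theory Defs
  imports Complex_Main "HOL-Library.Multiset"
begin

definition pow :: "'a set \<Rightarrow> 'a set set" where
  "pow X = {\<sigma>. \<sigma> \<subseteq> X \<and> \<sigma> \<noteq> {}}"

definition filtration :: "'a set \<Rightarrow> ('a set \<Rightarrow> real) \<Rightarrow> bool" where
  "filtration X F \<longleftrightarrow> (\<forall>\<sigma>\<in>pow X. \<forall>\<tau>\<in>pow X. \<sigma> \<subseteq> \<tau> \<longrightarrow> F \<sigma> \<le> F \<tau>)"

definition pullback :: "('c \<Rightarrow> 'a) \<Rightarrow> ('a set \<Rightarrow> real) \<Rightarrow> 'c set \<Rightarrow> real" where
  "pullback \<phi> F = (\<lambda>\<kappa>. F (\<phi> ` \<kappa>))"

text \<open>Surjection Z onto X, given by a function whose image of Z is X.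
  The witnessing finite set Z is taken inside nat (every finite set embeds there).\<close>
definition weakly_equivalent ::
  "'a set \<Rightarrow> ('a set \<Rightarrow> real) \<Rightarrow> 'b set \<Rightarrow> ('b set \<Rightarrow> real) \<Rightarrow> bool" where
  "weakly_equivalent X FX Y FY \<longleftrightarrow>
     (\<exists>(Z::nat set) (\<phi>X::nat \<Rightarrow> 'a) (\<phi>Y::nat \<Rightarrow> 'b). finite Z \<and> \<phi>X ` Z = X \<and> \<phi>Y ` Z = Y \<and>
        (\<forall>\<kappa>\<in>pow Z. pullback \<phi>X FX \<kappa> = pullback \<phi>Y FY \<kappa>))"

definition Cset :: "'a set \<Rightarrow> ('a set \<Rightarrow> real) \<Rightarrow> real \<Rightarrow> 'a set set" where
  "Cset X F t = {\<sigma> \<in> pow X. F \<sigma> \<le> t \<and>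
       (\<forall>\<tau>\<in>pow X. F \<tau> \<le> t \<longrightarrow> \<sigma> \<subseteq> \<tau> \<longrightarrow> \<tau> = \<sigma>)}"

definition Ival :: "'a set \<Rightarrow> ('a set \<Rightarrow> real) \<Rightarrow> 'a set \<Rightarrow> real set" where
  "Ival X F \<sigma> = {t. \<sigma> \<in> Cset X F t}"

definition mgm :: "'a set \<Rightarrow> ('a set \<Rightarrow> real) \<Rightarrow> real set multiset" where
  "mgm X F = image_mset (Ival X F) (mset_set {\<sigma> \<in> pow X. Ival X F \<sigma> \<noteq> {}})"

end

theory Submission
  imports Defs
begin

text \<open>Pulling back along a surjection \<open>\<phi> : Z \<rightarrow> X\<close> does not change the mergegram.
  A set \<open>\<sigma> \<subseteq> Z\<close> is maximal for the pulled-back filtration at level \<open>t\<close> exactly when it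
  is saturated, \<open>\<sigma> = Z \<inter> \<phi> -` \<phi> ` \<sigma>\<close>, and its image is maximal for \<open>F\<close> at level \<open>t\<close>:
  the saturation of \<open>\<sigma>\<close> has the same filtration value, so an unsaturated set is never
  maximal. Hence the nonempty intervals of the pullback are those of \<open>F\<close>, indexed by the
  saturated preimages \<open>Z \<inter> \<phi> -` \<rho>\<close>, a bijective copy of the subsets \<open>\<rho>\<close> of \<open>X\<close>.
  Weakly equivalent filtrations have a common pullback, so their mergegrams agree.\<close>

lemma mgm_cong:
  assumes "\<forall>\<kappa>\<in>pow Z. F \<kappa> = G \<kappa>"
  shows "mgm Z F = mgm Z G"
proof -
  have "Cset Z F t = Cset Z G t" for t
    using assms unfolding Cset_def by auto
  then have "Ival Z F = Ival Z G"
    unfolding Ival_def by (auto intro!: ext)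
  then show ?thesis
    unfolding mgm_def by simp
qed

lemma Cset_pullback_iff:
  assumes surj: "\<phi> ` Z = X" and \<sigma>: "\<sigma> \<in> pow Z"
  shows "\<sigma> \<in> Cset Z (pullback \<phi> F) t \<longleftrightarrow>
         \<sigma> = Z \<inter> \<phi> -` \<phi> ` \<sigma> \<and> \<phi> ` \<sigma> \<in> Cset X F t"
proof
  assume max: "\<sigma> \<in> Cset Z (pullback \<phi> F) t"
  have saturated: "Z \<inter> \<phi> -` \<rho> = \<sigma> \<and> \<rho> = \<phi> ` \<sigma>"
    if "\<rho> \<in> pow X" "F \<rho> \<le> t" "\<phi> ` \<sigma> \<subseteq> \<rho>" for \<rho>
  proof -
    have image: "\<phi> ` (Z \<inter> \<phi> -` \<rho>) = \<rho>"
      using that(1) surj by (auto simp: pow_def)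
    then have "Z \<inter> \<phi> -` \<rho> \<in> pow Z"
      using that(1) by (auto simp: pow_def)
    moreover have "pullback \<phi> F (Z \<inter> \<phi> -` \<rho>) \<le> t"
      using image that(2) by (simp add: pullback_def)
    moreover have "\<sigma> \<subseteq> Z \<inter> \<phi> -` \<rho>"
      using that(3) \<sigma> by (auto simp: pow_def)
    ultimately have "Z \<inter> \<phi> -` \<rho> = \<sigma>"
      using max unfolding Cset_def by blast
    with image show ?thesis
      by simp
  qed
  have "\<phi> ` \<sigma> \<in> pow X" and "F (\<phi> ` \<sigma>) \<le> t"
    using \<sigma> surj max by (auto simp: pow_def Cset_def pullback_def)
  with saturated show "\<sigma> = Z \<inter> \<phi> -` \<phi> ` \<sigma> \<and> \<phi> ` \<sigma> \<in> Cset X F t"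
    unfolding Cset_def by blast
next
  assume sat: "\<sigma> = Z \<inter> \<phi> -` \<phi> ` \<sigma> \<and> \<phi> ` \<sigma> \<in> Cset X F t"
  have "\<tau> = \<sigma>" if "\<tau> \<in> pow Z" "F (\<phi> ` \<tau>) \<le> t" "\<sigma> \<subseteq> \<tau>" for \<tau>
  proof -
    have "\<phi> ` \<tau> \<in> pow X"
      using that(1) surj by (auto simp: pow_def)
    moreover have "\<phi> ` \<sigma> \<subseteq> \<phi> ` \<tau>"
      using that(3) by (rule image_mono)
    ultimately have "\<phi> ` \<tau> = \<phi> ` \<sigma>"
      using sat that(2) unfolding Cset_def by blast
    then have "\<tau> \<subseteq> Z \<inter> \<phi> -` \<phi> ` \<sigma>"
      using that(1) by (auto simp: pow_def)
    then show ?thesis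
      using sat that(3) by blast
  qed
  then show "\<sigma> \<in> Cset Z (pullback \<phi> F) t"
    using \<sigma> sat unfolding Cset_def pullback_def by auto
qed

lemma Ival_pullback:
  assumes "\<phi> ` Z = X" and "\<sigma> \<in> pow Z"
  shows "Ival Z (pullback \<phi> F) \<sigma> =
         (if \<sigma> = Z \<inter> \<phi> -` \<phi> ` \<sigma> then Ival X F (\<phi> ` \<sigma>) else {})"
  using Cset_pullback_iff[OF assms] unfolding Ival_def by auto

lemma Ival_pullback_vimage:
  assumes surj: "\<phi> ` Z = X" and \<rho>: "\<rho> \<in> pow X"
  shows "Z \<inter> \<phi> -` \<rho> \<in> pow Z"
    and "Ival Z (pullback \<phi> F) (Z \<inter> \<phi> -` \<rho>) = Ival X F \<rho>"
proof -
  have image: "\<phi> ` (Z \<inter> \<phi> -` \<rho>) = \<rho>"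
    using surj \<rho> by (auto simp: pow_def)
  with \<rho> show pow: "Z \<inter> \<phi> -` \<rho> \<in> pow Z"
    by (auto simp: pow_def)
  show "Ival Z (pullback \<phi> F) (Z \<inter> \<phi> -` \<rho>) = Ival X F \<rho>"
    using Ival_pullback[OF surj pow] image by simp
qed

lemma nonempty_Ival_pullback:
  assumes surj: "\<phi> ` Z = X"
  shows "{\<sigma> \<in> pow Z. Ival Z (pullback \<phi> F) \<sigma> \<noteq> {}} =
         (\<lambda>\<rho>. Z \<inter> \<phi> -` \<rho>) ` {\<rho> \<in> pow X. Ival X F \<rho> \<noteq> {}}"
proof (intro equalityI subsetI)
  fix \<sigma> assume "\<sigma> \<in> {\<sigma> \<in> pow Z. Ival Z (pullback \<phi> F) \<sigma> \<noteq> {}}"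
  then have "\<sigma> \<in> pow Z" and "Ival Z (pullback \<phi> F) \<sigma> \<noteq> {}"
    by auto
  then have "\<sigma> = Z \<inter> \<phi> -` \<phi> ` \<sigma>" and "Ival X F (\<phi> ` \<sigma>) \<noteq> {}"
    using Ival_pullback[OF surj \<open>\<sigma> \<in> pow Z\<close>, of F] by (auto split: if_splits)
  moreover have "\<phi> ` \<sigma> \<in> pow X"
    using \<open>\<sigma> \<in> pow Z\<close> surj by (auto simp: pow_def)
  ultimately show "\<sigma> \<in> (\<lambda>\<rho>. Z \<inter> \<phi> -` \<rho>) ` {\<rho> \<in> pow X. Ival X F \<rho> \<noteq> {}}"
    by blast
next
  fix \<sigma> assume "\<sigma> \<in> (\<lambda>\<rho>. Z \<inter> \<phi> -` \<rho>) ` {\<rho> \<in> pow X. Ival X F \<rho> \<noteq> {}}"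
  then show "\<sigma> \<in> {\<sigma> \<in> pow Z. Ival Z (pullback \<phi> F) \<sigma> \<noteq> {}}"
    using Ival_pullback_vimage[OF surj] by auto
qed

lemma mgm_pullback:
  assumes surj: "\<phi> ` Z = X"
  shows "mgm Z (pullback \<phi> F) = mgm X F"
proof -
  let ?S = "{\<rho> \<in> pow X. Ival X F \<rho> \<noteq> {}}"
  have "inj_on (\<lambda>\<rho>. Z \<inter> \<phi> -` \<rho>) ?S"
    by (rule inj_on_inverseI[where g = "image \<phi>"]) (use surj in \<open>auto simp: pow_def\<close>)
  then have "mgm Z (pullback \<phi> F) =
      image_mset (\<lambda>\<rho>. Ival Z (pullback \<phi> F) (Z \<inter> \<phi> -` \<rho>)) (mset_set ?S)"
    unfolding mgm_def nonempty_Ival_pullback[OF surj]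
    by (simp add: image_mset_mset_set[symmetric] multiset.map_comp comp_def)
  also have "\<dots> = image_mset (Ival X F) (mset_set ?S)"
    using Ival_pullback_vimage(2)[OF surj]
    by (intro image_mset_cong) (cases "finite ?S"; auto)
  finally show ?thesis
    unfolding mgm_def .
qed

theorem mainTheorem14:
  fixes X :: "'a set" and Y :: "'b set"
    and FX :: "'a set \<Rightarrow> real" and FY :: "'b set \<Rightarrow> real"
  assumes "finite X" and "finite Y"
    and "filtration X FX" and "filtration Y FY"
    and "weakly_equivalent X FX Y FY"
  shows "mgm X FX = mgm Y FY"
proof -
  obtain Z :: "nat set" and \<phi>X \<phi>Y where "\<phi>X ` Z = X" "\<phi>Y ` Z = Y"
    and common: "\<forall>\<kappa>\<in>pow Z. pullback \<phi>X FX \<kappa> = pullback \<phi>Y FY \<kappa>"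
    using assms(5) unfolding weakly_equivalent_def by blast
  then have "mgm X FX = mgm Z (pullback \<phi>X FX)"
    and "mgm Y FY = mgm Z (pullback \<phi>Y FY)"
    using mgm_pullback by metis+
  with mgm_cong[OF common] show ?thesis
    by simp
qed

end
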